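(* Assume: - the strengthened triangle inequality under the square holds with constant $a_0$; - the forms $\overline a_{l,i}$ provide a positive semi-definite splitting with constant $b_0$; - the subspaces are locally stable with constant $C_1$. Let $v_h\in V_h$ and define recursively $v_L=v_h$. For $l=L,L-1,\dots,1$, let $v_l=v_{l-1}+\sum_{i=1}^{P_l}v_{l,i}$ be a decomposition of $v_l\in V_{h,l}$ as in the definition of local stability. This yields $v_h=v_0+\sum_{l=1}^L\sum_{i=1}^{P_l}v_{l,i}$ with $v_0\in V_{h,0}$. Then, with $C=2(1+a_0b_0C_1)$, $$\|v_0\|_{a_h}^2+\sum_{l=1}^L\sum_{i=1}^{P_l}\|v_{l,i}\|_{a_h}^2\le C^L\Bigl(1+\frac{b_0C_1}{C-1}\Bigr)\|v_h\|_{a_h}^2.$$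
   Context: Let $V_h$ be a finite-dimensional real vector space with a symmetric positive definite bilinear form $a_h$, and $\|v\|_{a_h}=\sqrt{a_h(v,v)}$. Let $L\ge1$ and let $V_{h,0}\subseteq V_{h,1}\subseteq\cdots\subseteq V_{h,L}=V_h$ be nested subspaces. For each level $1\le l\le L$ let $P_l\in\mathbb N$ and let $V_{h,l,i}\subseteq V_{h,l}$, $i=1,\dots,P_l$, be subspaces. For each such $(l,i)$ let $\overline V_{h,l,i}$ be a finite-dimensional real vector space, $r_{l,i}:V_{h,l}\to\overline V_{h,l,i}$ a linear map, and $\overline a_{l,i}$ a symmetric positive semi-definite bilinear form on $\overline V_{h,l,i}$ with seminorm $|w|_{\overline a_{l,i}}=\sqrt{\overline a_{l,i}(w,w)}$. Strengthened triangle inequality under the square with constant $a_0>0$: for every $1\le l\le L$ and every choice of $v_{l,i}\in V_{h,l,i}$, $$\Bigl\|\sum_{i=1}^{P_l}v_{l,i}\Bigr\|_{a_h}^2\le a_0\sum_{i=1}^{P_l}\|v_{l,i}\|_{a_h}^2.$$ Positive semi-definite splitting with constant $b_0>0$: for every $1\le l\le L$ and all $v_l\in V_{h,l}$, $$\sum_{i=1}^{P_l}|r_{l,i}v_l|_{\overline a_{l,i}}^2\le b_0\|v_l\|_{a_h}^2.$$ Local stability with constant $C_1>0$: for every $1\le l\le L$ and every $v_l\in V_{h,l}$ there is a decomposition $v_l=v_{l-1}+\sum_{i=1}^{P_l}v_{l,i}$ with $v_{l-1}\in V_{h,l-1}$ and $v_{l,i}\in V_{h,l,i}$ such that $$\|v_{l,i}\|_{a_h}^2\le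 C_1|r_{l,i}v_l|_{\overline a_{l,i}}^2\quad\text{for all }1\le i\le P_l.$$ The constants $a_0,b_0,C_1$ are independent of $l$. *)

theory Defs
  imports "HOL-Analysis.Analysis"
begin

definition sqn :: "('a \<Rightarrow> 'a \<Rightarrow> real) \<Rightarrow> 'a \<Rightarrow> real" where
  "sqn b v = b v v"

definition spd_form :: "('a::real_vector \<Rightarrow> 'a \<Rightarrow> real) \<Rightarrow> bool" where
  "spd_form b \<longleftrightarrow> bilinear b \<and> (\<forall>x y. b x y = b y x) \<and> (\<forall>x. x \<noteq> 0 \<longrightarrow> b x x > 0)"

definition spsd_form :: "('a::real_vector \<Rightarrow> 'a \<Rightarrow> real) \<Rightarrow> bool" where
  "spsd_form b \<longleftrightarrow> bilinear b \<and> (\<forall>x y. b x y = b y x) \<and> (\<forall>x. b x x \<ge> 0)"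

definition linear_on_sub :: "'a::real_vector set \<Rightarrow> ('a \<Rightarrow> 'b::real_vector) \<Rightarrow> bool" where
  "linear_on_sub S f \<longleftrightarrow> (\<forall>x\<in>S. \<forall>y\<in>S. f (x + y) = f x + f y) \<and> (\<forall>c. \<forall>x\<in>S. f (c *\<^sub>R x) = c *\<^sub>R f x)"

end

theory Submission
  imports Defs
begin

text \<open>Going down one level costs a factor \<open>C\<close>: the parallelogram law and the strengthened
  triangle inequality give \<open>\<parallel>v\<^sub>l\<^sub>-\<^sub>1\<parallel>\<^sup>2 \<le> C \<parallel>v\<^sub>l\<parallel>\<^sup>2\<close>, while local stability together
  with the splitting gives \<open>\<Sum>\<^sub>i \<parallel>v\<^sub>l\<^sub>,\<^sub>i\<parallel>\<^sup>2 \<le> b\<^sub>0 C\<^sub>1 \<parallel>v\<^sub>l\<parallel>\<^sup>2\<close>. Unrolling these two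
  estimates from level \<open>L\<close> down to \<open>0\<close> sums a geometric series in \<open>C\<close>.\<close>

lemma spd_form_imp_spsd_form: "spd_form b \<Longrightarrow> spsd_form b"
  unfolding spd_form_def spsd_form_def
  by (metis bilinear_lzero order_less_imp_le order_refl)

lemma sqn_nonneg: "spsd_form b \<Longrightarrow> 0 \<le> sqn b x"
  by (simp add: spsd_form_def sqn_def)

lemma sqn_parallelogram:
  assumes "bilinear b"
  shows "sqn b (x + y) + sqn b (x - y) = 2 * sqn b x + 2 * sqn b y"
  by (simp add: sqn_def bilinear_ladd[OF assms] bilinear_radd[OF assms]
      bilinear_lsub[OF assms] bilinear_rsub[OF assms])

lemma sqn_diff_le:
  assumes "spsd_form b"
  shows "sqn b (x - y) \<le> 2 * sqn b x + 2 * sqn b y"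
proof -
  have "bilinear b" using assms by (simp add: spsd_form_def)
  with sqn_parallelogram[of b x y] sqn_nonneg[OF assms, of "x + y"] show ?thesis
    by linarith
qed

lemma sqn_coarse_part_le:
  assumes "spsd_form b" and "x = y + s" and "0 \<le> a0"
    and "sqn b s \<le> a0 * S" and "S \<le> \<beta> * sqn b x"
  shows "sqn b y \<le> 2 * (1 + a0 * \<beta>) * sqn b x"
proof -
  have "sqn b s \<le> a0 * (\<beta> * sqn b x)"
    using assms(3-5) by (meson mult_left_mono order_trans)
  moreover have "sqn b y \<le> 2 * sqn b x + 2 * sqn b s"
    using sqn_diff_le[OF assms(1), of x s] assms(2) by simp
  ultimately show ?thesis by (simp add: algebra_simps)
qed

lemma sum_le_split_bound:
  fixes f g :: "'i \<Rightarrow> real"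
  assumes "\<forall>i\<in>I. f i \<le> c * g i" and "sum g I \<le> b * x" and "0 \<le> c"
  shows "sum f I \<le> b * c * x"
proof -
  have "sum f I \<le> c * sum g I"
    using assms(1) by (simp add: sum_distrib_left sum_mono)
  also have "\<dots> \<le> c * (b * x)" using assms(2,3) by (rule mult_left_mono)
  finally show ?thesis by (simp add: algebra_simps)
qed

text \<open>\<open>n l\<close> plays the role of \<open>\<parallel>v\<^sub>l\<parallel>\<^sup>2\<close> and \<open>d l\<close> that of \<open>\<Sum>\<^sub>i \<parallel>v\<^sub>l\<^sub>,\<^sub>i\<parallel>\<^sup>2\<close>.\<close>

lemma multilevel_recursion_bound:
  fixes n d :: "nat \<Rightarrow> real" and C \<beta> :: real
  assumes C: "1 < C" and \<beta>: "0 \<le> \<beta>" and nL: "0 \<le> n L"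
    and d_le: "\<And>l. 1 \<le> l \<Longrightarrow> l \<le> L \<Longrightarrow> d l \<le> \<beta> * n l"
    and n_le: "\<And>l. 1 \<le> l \<Longrightarrow> l \<le> L \<Longrightarrow> n (l - 1) \<le> C * n l"
  shows "n 0 + (\<Sum>l=1..L. d l) \<le> C ^ L * (1 + \<beta> / (C - 1)) * n L"
proof -
  define K where "K l = C ^ l + \<beta> * (C ^ l - 1) / (C - 1)" for l :: nat
  have K_Suc: "K l * C + \<beta> = K (Suc l)" for l
    using C by (simp add: K_def field_simps)
  have K_nonneg: "0 \<le> K l" for l
  proof -
    have "1 \<le> C ^ l" using C by (simp add: one_le_power)
    then show ?thesis using C \<beta> by (simp add: K_def)
  qed
  have partial: "n 0 + (\<Sum>j=1..l. d j) \<le> K l * n l" if "l \<le> L" for l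
    using that
  proof (induction l)
    case 0
    then show ?case by (simp add: K_def)
  next
    case (Suc l)
    then have l: "1 \<le> Suc l" "Suc l \<le> L" by auto
    have "K l * n l \<le> K l * (C * n (Suc l))"
      using n_le[OF l] K_nonneg by (simp add: mult_left_mono)
    then have "n 0 + (\<Sum>j=1..Suc l. d j) \<le> K l * (C * n (Suc l)) + \<beta> * n (Suc l)"
      using Suc d_le[OF l] by simp
    then show ?case by (simp add: K_Suc[symmetric] algebra_simps)
  qed
  have "K L = C ^ L * (1 + \<beta> / (C - 1)) - \<beta> / (C - 1)"
    by (simp add: K_def diff_divide_distrib algebra_simps)
  then have "K L \<le> C ^ L * (1 + \<beta> / (C - 1))"
    using C \<beta> by simp
  with partial[of L] nL show ?thesis
    by (meson mult_right_mono order_trans order_refl)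
qed

theorem lemma3p10:
  fixes a :: "'v::euclidean_space \<Rightarrow> 'v \<Rightarrow> real"
    and L :: nat and V :: "nat \<Rightarrow> 'v set" and P :: "nat \<Rightarrow> nat"
    and W :: "nat \<Rightarrow> nat \<Rightarrow> 'v set"
    and r :: "nat \<Rightarrow> nat \<Rightarrow> 'v \<Rightarrow> 'w::euclidean_space"
    and abar :: "nat \<Rightarrow> nat \<Rightarrow> 'w \<Rightarrow> 'w \<Rightarrow> real"
    and a0 b0 C1 :: real
    and vh :: 'v and v :: "nat \<Rightarrow> 'v" and vd :: "nat \<Rightarrow> nat \<Rightarrow> 'v"
  assumes a_spd: "spd_form a"
    and L_pos: "L \<ge> 1"
    and V_sub: "\<And>l. l \<le> L \<Longrightarrow> subspace (V l)"
    and V_nested: "\<And>l. l < L \<Longrightarrow> V l \<subseteq> V (Suc l)"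
    and V_top: "V L = UNIV"
    and P_pos: "\<And>l. 1 \<le> l \<Longrightarrow> l \<le> L \<Longrightarrow> P l \<ge> 1"
    and W_sub: "\<And>l i. 1 \<le> l \<Longrightarrow> l \<le> L \<Longrightarrow> 1 \<le> i \<Longrightarrow> i \<le> P l \<Longrightarrow>
                  subspace (W l i) \<and> W l i \<subseteq> V l"
    and r_lin: "\<And>l i. 1 \<le> l \<Longrightarrow> l \<le> L \<Longrightarrow> 1 \<le> i \<Longrightarrow> i \<le> P l \<Longrightarrow>
                  linear_on_sub (V l) (r l i)"
    and abar_psd: "\<And>l i. 1 \<le> l \<Longrightarrow> l \<le> L \<Longrightarrow> 1 \<le> i \<Longrightarrow> i \<le> P l \<Longrightarrow>
                  spsd_form (abar l i)"
    and a0_pos: "a0 > 0" and b0_pos: "b0 > 0" and C1_pos: "C1 > 0"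
    and STI: "\<And>l w. 1 \<le> l \<Longrightarrow> l \<le> L \<Longrightarrow> (\<forall>i\<in>{1..P l}. w i \<in> W l i) \<Longrightarrow>
                sqn a (\<Sum>i=1..P l. w i) \<le> a0 * (\<Sum>i=1..P l. sqn a (w i))"
    and PSD_split: "\<And>l x. 1 \<le> l \<Longrightarrow> l \<le> L \<Longrightarrow> x \<in> V l \<Longrightarrow>
                (\<Sum>i=1..P l. sqn (abar l i) (r l i x)) \<le> b0 * sqn a x"
    and loc_stab: "\<And>l x. 1 \<le> l \<Longrightarrow> l \<le> L \<Longrightarrow> x \<in> V l \<Longrightarrow>
                \<exists>y w. y \<in> V (l - 1) \<and> (\<forall>i\<in>{1..P l}. w i \<in> W l i) \<and>
                   x = y + (\<Sum>i=1..P l. w i) \<and>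
                   (\<forall>i\<in>{1..P l}. sqn a (w i) \<le> C1 * sqn (abar l i) (r l i x))"
    and v_top: "v L = vh"
    and v_dec: "\<And>l. 1 \<le> l \<Longrightarrow> l \<le> L \<Longrightarrow>
                v (l - 1) \<in> V (l - 1) \<and> (\<forall>i\<in>{1..P l}. vd l i \<in> W l i) \<and>
                v l = v (l - 1) + (\<Sum>i=1..P l. vd l i) \<and>
                (\<forall>i\<in>{1..P l}. sqn a (vd l i) \<le> C1 * sqn (abar l i) (r l i (v l)))"
  shows "let C = 2 * (1 + a0 * b0 * C1) in
         sqn a (v 0) + (\<Sum>l=1..L. \<Sum>i=1..P l. sqn a (vd l i))
           \<le> C ^ L * (1 + b0 * C1 / (C - 1)) * sqn a vh"
proof -
  have a_spsd: "spsd_form a" using a_spd by (rule spd_form_imp_spsd_form)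
  have v_in_V: "v l \<in> V l" if "1 \<le> l" "l \<le> L" for l
    using that V_top v_dec[of "Suc l"] by (cases "l = L") auto
  have level_sum: "(\<Sum>i=1..P l. sqn a (vd l i)) \<le> b0 * C1 * sqn a (v l)"
    if l: "1 \<le> l" "l \<le> L" for l
    using v_dec[OF l] PSD_split[OF l v_in_V[OF l]] C1_pos by (intro sum_le_split_bound) auto
  define C where "C = 2 * (1 + a0 * b0 * C1)"
  have coarse: "sqn a (v (l - 1)) \<le> C * sqn a (v l)" if l: "1 \<le> l" "l \<le> L" for l
    unfolding C_def mult.assoc[of a0 b0 C1]
    using a_spsd v_dec[OF l] a0_pos STI[OF l] level_sum[OF l]
    by (intro sqn_coarse_part_le) auto
  have "0 < a0 * b0 * C1" using a0_pos b0_pos C1_pos by simp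
  then have "1 < C" by (simp add: C_def)
  moreover have "0 \<le> b0 * C1" using b0_pos C1_pos by simp
  ultimately have "sqn a (v 0) + (\<Sum>l=1..L. \<Sum>i=1..P l. sqn a (vd l i))
      \<le> C ^ L * (1 + b0 * C1 / (C - 1)) * sqn a (v L)"
    using sqn_nonneg[OF a_spsd] level_sum coarse by (rule multilevel_recursion_bound)
  then show ?thesis by (simp add: v_top Let_def C_def)
qed

end
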